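(* Let $\beta>0$ and let $m,n\to\infty$ with $m n^{-1}\to\beta$. Let $\mathrm{P}^{\star}$ (depending on $m,n$) be a probability distribution on $\{0,1,\dots,n\}$ and let $X$ be a random variable with distribution $\mathrm{P}^{\star}$. Assume that (i) $X$ converges in distribution to a random variable $Z$; (ii) $\mathbf{E} Z^2<\infty$ and $\lim_{m,n\to\infty}\mathbf{E} X^2=\mathbf{E} Z^2$; (iii) $\mathbf{E} Z^3=\infty$. Then the global clustering coefficient of the passive random intersection graph $G^{\star}=G^{\star}(n,m,\mathrm{P}^{\star})$ satisfies $C_{G^{\star}}=1-o_P(1)$.
   Context: Passive random intersection graph $G^{\star}(n,m,\mathrm{P}^{\star})$: vertex set $V=\{v_1,\dots,v_n\}$, auxiliary attribute set $W=\{w_1,\dots,w_m\}$. Each attribute $w\in W$ independently selects a random subset $D_w\subset V$ with $\mathbf{P}(D_w=A)=\mathrm{P}^{\star}(|A|)\binom{n}{|A|}^{-1}$ for $A\subset V$. Two distinct vertices $u,v$ are adjacent iff $u,v\in D_w$ for some $w\in W$. For a graph $G$, the global clustering coefficient is $C_G=3\Delta/\Lambda$, where $\Delta$ is the number of triangles and $\Lambda$ the number of paths of length $2$ in $G$. $o_P(1)$ denotes a quantity converging to $0$ in probability. *)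

theory Defs
  imports "HOL-Probability.Probability"
begin

definition attr_set_pmf :: "nat \<Rightarrow> nat pmf \<Rightarrow> nat set pmf" where
  "attr_set_pmf n Pstar =
     bind_pmf Pstar (\<lambda>s. pmf_of_set {A. A \<subseteq> {..<n} \<and> card A = s})"

definition passive_rig :: "nat \<Rightarrow> nat \<Rightarrow> nat pmf \<Rightarrow> (nat \<Rightarrow> nat set) pmf" where
  "passive_rig n m Pstar = Pi_pmf {..<m} {} (\<lambda>_. attr_set_pmf n Pstar)"

definition rig_adj :: "nat \<Rightarrow> (nat \<Rightarrow> nat set) \<Rightarrow> nat \<Rightarrow> nat \<Rightarrow> bool" where
  "rig_adj m D u v \<longleftrightarrow> u \<noteq> v \<and> (\<exists>w<m. u \<in> D w \<and> v \<in> D w)"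

definition num_triangles :: "nat \<Rightarrow> (nat \<Rightarrow> nat \<Rightarrow> bool) \<Rightarrow> nat" where
  "num_triangles n E =
     card {T. T \<subseteq> {..<n} \<and> card T = 3 \<and> (\<forall>u\<in>T. \<forall>v\<in>T. u \<noteq> v \<longrightarrow> E u v)}"

definition num_2paths :: "nat \<Rightarrow> (nat \<Rightarrow> nat \<Rightarrow> bool) \<Rightarrow> nat" where
  "num_2paths n E =
     card {(v, P). v < n \<and> P \<subseteq> {..<n} \<and> card P = 2 \<and> v \<notin> P \<and> (\<forall>u\<in>P. E v u)}"

text \<open>Global clustering coefficient 3*Delta/Lambda (equal to 0 if Lambda = 0, by the
convention x / 0 = 0).\<close>
definition global_clustering :: "nat \<Rightarrow> (nat \<Rightarrow> nat \<Rightarrow> bool) \<Rightarrow> real" where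
  "global_clustering n E = 3 * real (num_triangles n E) / real (num_2paths n E)"

end

theory Submission
  imports Defs
begin

text \<open>
  Every attribute w turns D_w into a clique, which contains S_w = |D_w| ((|D_w| - 1) choose 2) 2-paths,
  all of them closed. A 2-path not inside a single clique uses two distinct attributes sharing its
  centre, and a 2-path inside two cliques is counted by such a pair as well; so with
  R = \<Sum>_{w \<noteq> w'} |D_w \<inter> D_w'| |D_w| |D_w'| one has 3\<Delta> \<le> \<Lambda> \<le> 3\<Delta> + R and \<Sum>_w S_w \<le> 3\<Delta> + R.
  Hence C is close to 1 as soon as R is small compared with \<Sum>_w S_w.

  Now E R = m (m - 1) (E X^2)^2 / n = O(n), since E X^2 is bounded, and Markov's inequality makes
  R \<le> \<epsilon> L n likely. On the other hand \<Sum>_w S_w is a sum of m independent copies of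
  S(X) ~ X^3 / 2, whose mean is infinite in the limit: truncating S at a level T large enough
  that the limiting truncated mean exceeds any given multiple of L, Chebyshev's inequality shows
  \<Sum>_w S_w \<ge> L n with high probability.
\<close>

section \<open>Counting 2-paths in an intersection graph\<close>

definition closed_2paths :: "nat \<Rightarrow> (nat \<Rightarrow> nat \<Rightarrow> bool) \<Rightarrow> (nat \<times> nat set) set" where
  "closed_2paths N E =
     {(v, P). v < N \<and> P \<subseteq> {..<N} \<and> card P = 2 \<and> v \<notin> P \<and> (\<forall>u\<in>P. E v u)
        \<and> (\<forall>a\<in>P. \<forall>b\<in>P. a \<noteq> b \<longrightarrow> E a b)}"

lemma finite_closed_2paths: "finite (closed_2paths N E)"
  unfolding closed_2paths_def by (rule finite_subset[of _ "{..<N} \<times> Pow {..<N}"]) auto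

lemma card_closed_2paths:
  assumes sym: "\<And>u v. E u v \<Longrightarrow> E v u"
  shows "card (closed_2paths N E) = 3 * num_triangles N E"
proof -
  define Tri where "Tri = {T. T \<subseteq> {..<N} \<and> card T = 3 \<and> (\<forall>u\<in>T. \<forall>v\<in>T. u \<noteq> v \<longrightarrow> E u v)}"
  have "bij_betw (\<lambda>(v, P). (insert v P, v)) (closed_2paths N E) (Sigma Tri (\<lambda>T. T))"
  proof (rule bij_betw_byWitness[where f' = "\<lambda>(T, v). (v, T - {v})"])
    have "(insert v P, v) \<in> Sigma Tri (\<lambda>T. T)" if "(v, P) \<in> closed_2paths N E" for v P
    proof -
      from that have h: "v < N" "P \<subseteq> {..<N}" "card P = 2" "v \<notin> P" "\<forall>u\<in>P. E v u"
        "\<forall>a\<in>P. \<forall>b\<in>P. a \<noteq> b \<longrightarrow> E a b" unfolding closed_2paths_def by auto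
      then have "card (insert v P) = 3" by (simp add: card.insert_remove card_ge_0_finite)
      moreover have "\<forall>a\<in>insert v P. \<forall>b\<in>insert v P. a \<noteq> b \<longrightarrow> E a b"
        using h sym by blast
      ultimately show ?thesis unfolding Tri_def using h by auto
    qed
    then show "(\<lambda>(v, P). (insert v P, v)) ` closed_2paths N E \<subseteq> Sigma Tri (\<lambda>T. T)" by auto
    have "(v, T - {v}) \<in> closed_2paths N E" if "T \<in> Tri" "v \<in> T" for T v
    proof -
      from that have "card (T - {v}) = 2" unfolding Tri_def by (simp add: card_ge_0_finite)
      then show ?thesis using that unfolding Tri_def closed_2paths_def by auto
    qed
    then show "(\<lambda>(T, v). (v, T - {v})) ` Sigma Tri (\<lambda>T. T) \<subseteq> closed_2paths N E" by auto
  qed (auto simp: closed_2paths_def)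
  then have "card (closed_2paths N E) = card (Sigma Tri (\<lambda>T. T))" by (rule bij_betw_same_card)
  also have "\<dots> = (\<Sum>T\<in>Tri. card T)"
    by (rule card_SigmaI) (auto simp: Tri_def intro: finite_subset[of _ "Pow {..<N}"] card_ge_0_finite)
  also have "\<dots> = 3 * card Tri" by (simp add: Tri_def)
  finally show ?thesis unfolding Tri_def num_triangles_def .
qed

lemma triple_num_triangles_le_num_2paths:
  assumes "\<And>u v. E u v \<Longrightarrow> E v u"
  shows "3 * num_triangles N E \<le> num_2paths N E"
proof -
  have "closed_2paths N E \<subseteq> {(v, P). v < N \<and> P \<subseteq> {..<N} \<and> card P = 2 \<and> v \<notin> P \<and> (\<forall>u\<in>P. E v u)}"
    unfolding closed_2paths_def by auto
  then have "card (closed_2paths N E) \<le> num_2paths N E" unfolding num_2paths_def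
    by (rule card_mono[rotated]) (auto intro: finite_subset[of _ "{..<N} \<times> Pow {..<N}"])
  then show ?thesis using card_closed_2paths[OF assms] by simp
qed

lemma sum_off_diagonal_insert:
  fixes f :: "'i \<Rightarrow> 'i \<Rightarrow> 'b::comm_monoid_add"
  assumes "finite I" "x \<notin> I"
  shows "(\<Sum>i\<in>insert x I. \<Sum>j\<in>insert x I - {i}. f i j)
       = (\<Sum>j\<in>I. f x j) + (\<Sum>i\<in>I. f i x) + (\<Sum>i\<in>I. \<Sum>j\<in>I - {i}. f i j)"
proof -
  have "(\<Sum>j\<in>insert x I - {i}. f i j) = f i x + (\<Sum>j\<in>I - {i}. f i j)" if "i \<in> I" for i
  proof -
    have "insert x I - {i} = insert x (I - {i})" using that assms(2) by auto
    then show ?thesis using assms by simp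
  qed
  then have "(\<Sum>i\<in>I. \<Sum>j\<in>insert x I - {i}. f i j) = (\<Sum>i\<in>I. f i x) + (\<Sum>i\<in>I. \<Sum>j\<in>I - {i}. f i j)"
    by (simp add: sum.distrib)
  moreover have "insert x I - {x} = I" using assms(2) by auto
  ultimately show ?thesis using assms by (simp add: add.assoc)
qed

lemma sum_card_le_card_UN_plus_overlaps:
  fixes F :: "'i \<Rightarrow> 'a set"
  assumes "finite I" "\<And>i. i \<in> I \<Longrightarrow> finite (F i)"
  shows "(\<Sum>i\<in>I. card (F i)) \<le> card (\<Union>i\<in>I. F i) + (\<Sum>i\<in>I. \<Sum>j\<in>I - {i}. card (F i \<inter> F j))"
  using assms
proof (induction I rule: finite_induct)
  case empty
  then show ?case by simp
next
  case (insert x I)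
  let ?U = "\<Union>i\<in>I. F i"
  have "card (F x) + card ?U = card (F x \<union> ?U) + card (F x \<inter> ?U)"
    by (rule card_Un_Int) (use insert in auto)
  moreover have "card (F x \<inter> ?U) \<le> (\<Sum>i\<in>I. card (F x \<inter> F i))"
    unfolding Int_UN_distrib by (rule card_UN_le) (use insert in auto)
  moreover have "(\<Sum>i\<in>I. card (F i)) \<le> card ?U + (\<Sum>i\<in>I. \<Sum>j\<in>I - {i}. card (F i \<inter> F j))"
    using insert by auto
  moreover have "(\<Sum>i\<in>I. card (F i \<inter> F x)) = (\<Sum>i\<in>I. card (F x \<inter> F i))"
    by (simp add: Int_commute)
  ultimately show ?case
    using insert.hyps sum_off_diagonal_insert[OF insert.hyps, of "\<lambda>i j. card (F i \<inter> F j)"]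
    by simp
qed

definition clique_2paths :: "nat set \<Rightarrow> (nat \<times> nat set) set" where
  "clique_2paths A = {(v, P). v \<in> A \<and> P \<subseteq> A \<and> card P = 2 \<and> v \<notin> P}"

definition clique_2path_count :: "nat \<Rightarrow> nat" where
  "clique_2path_count k = k * ((k - 1) choose 2)"

lemma finite_clique_2paths: "finite A \<Longrightarrow> finite (clique_2paths A)"
  unfolding clique_2paths_def by (rule finite_subset[of _ "A \<times> Pow A"]) auto

lemma card_clique_2paths: "finite A \<Longrightarrow> card (clique_2paths A) = clique_2path_count (card A)"
proof -
  assume A: "finite A"
  have "clique_2paths A = Sigma A (\<lambda>v. {P. P \<subseteq> A - {v} \<and> card P = 2})"
    unfolding clique_2paths_def by auto
  then have "card (clique_2paths A) = (\<Sum>v\<in>A. card {P. P \<subseteq> A - {v} \<and> card P = 2})"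
    using A by (simp add: card_SigmaI)
  also have "\<dots> = (\<Sum>v\<in>A. (card A - 1) choose 2)"
    by (rule sum.cong) (use A in \<open>auto simp: n_subsets\<close>)
  finally show ?thesis by (simp add: clique_2path_count_def)
qed

lemma card_clique_2paths_Int_le:
  assumes "finite A" "finite B"
  shows "card (clique_2paths A \<inter> clique_2paths B) \<le> card (A \<inter> B) * card A * card B"
proof -
  let ?C = "A \<inter> B"
  have C: "finite ?C" using assms by auto
  have "clique_2paths A \<inter> clique_2paths B \<subseteq> ?C \<times> {P. P \<subseteq> ?C \<and> card P = 2}"
    unfolding clique_2paths_def by auto
  moreover have "finite (?C \<times> {P. P \<subseteq> ?C \<and> card P = 2})"
    using C by (auto intro: finite_subset[of _ "Pow ?C"])
  ultimately have "card (clique_2paths A \<inter> clique_2paths B) \<le> card (?C \<times> {P. P \<subseteq> ?C \<and> card P = 2})"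
    by (intro card_mono)
  also have "\<dots> = card ?C * (card ?C choose 2)"
    by (simp only: card_cartesian_product n_subsets[OF C])
  also have "card ?C choose 2 \<le> card ?C * (card ?C - 1)"
    by (simp add: choose_two)
  also have "\<dots> \<le> card ?C * card ?C"
    by simp
  also have "card ?C * card ?C \<le> card A * card B"
    using assms by (intro mult_mono card_mono) auto
  finally show ?thesis by (simp add: mult.assoc mult_left_mono)
qed

definition clique_2path_total :: "nat \<Rightarrow> (nat \<Rightarrow> nat set) \<Rightarrow> nat" where
  "clique_2path_total M D = (\<Sum>w<M. clique_2path_count (card (D w)))"

definition overlap_weight :: "nat \<Rightarrow> (nat \<Rightarrow> nat set) \<Rightarrow> nat" where
  "overlap_weight M D =
     (\<Sum>w<M. \<Sum>w'\<in>{..<M} - {w}. card (D w \<inter> D w') * card (D w) * card (D w'))"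

lemma rig_adj_sym: "rig_adj M D u v \<Longrightarrow> rig_adj M D v u"
  unfolding rig_adj_def by blast

lemma card_UN_clique_2paths_le:
  assumes "\<forall>w<M. D w \<subseteq> {..<N}"
  shows "card (\<Union>w<M. clique_2paths (D w)) \<le> 3 * num_triangles N (rig_adj M D)"
proof -
  have "(\<Union>w<M. clique_2paths (D w)) \<subseteq> closed_2paths N (rig_adj M D)"
  proof
    fix x assume "x \<in> (\<Union>w<M. clique_2paths (D w))"
    then obtain w v P where w: "w < M" "x = (v, P)" "v \<in> D w" "P \<subseteq> D w" "card P = 2" "v \<notin> P"
      unfolding clique_2paths_def by auto
    have "\<forall>u\<in>P. rig_adj M D v u" "\<forall>a\<in>P. \<forall>b\<in>P. a \<noteq> b \<longrightarrow> rig_adj M D a b"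
      using w unfolding rig_adj_def by auto
    moreover have "v < N" "P \<subseteq> {..<N}" using w assms by auto
    ultimately show "x \<in> closed_2paths N (rig_adj M D)"
      using w unfolding closed_2paths_def by auto
  qed
  then have "card (\<Union>w<M. clique_2paths (D w)) \<le> card (closed_2paths N (rig_adj M D))"
    by (rule card_mono[OF finite_closed_2paths])
  then show ?thesis using card_closed_2paths[of "rig_adj M D", OF rig_adj_sym] by simp
qed

lemma clique_2path_total_le:
  assumes "\<forall>w<M. D w \<subseteq> {..<N}"
  shows "clique_2path_total M D \<le> 3 * num_triangles N (rig_adj M D) + overlap_weight M D"
proof -
  have fin: "finite (D w)" if "w < M" for w
    using assms that finite_subset by blast
  have "clique_2path_total M D = (\<Sum>w<M. card (clique_2paths (D w)))"
    unfolding clique_2path_total_def by (simp add: card_clique_2paths fin)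
  also have "\<dots> \<le> card (\<Union>w<M. clique_2paths (D w))
      + (\<Sum>w<M. \<Sum>w'\<in>{..<M} - {w}. card (clique_2paths (D w) \<inter> clique_2paths (D w')))"
    by (rule sum_card_le_card_UN_plus_overlaps) (auto intro: finite_clique_2paths fin)
  also have "\<dots> \<le> 3 * num_triangles N (rig_adj M D) + overlap_weight M D"
    unfolding overlap_weight_def using card_UN_clique_2paths_le[OF assms]
    by (intro add_mono sum_mono card_clique_2paths_Int_le) (auto simp: fin)
  finally show ?thesis .
qed

definition overlap_2paths :: "nat \<Rightarrow> (nat \<Rightarrow> nat set) \<Rightarrow> (nat \<times> nat set) set" where
  "overlap_2paths M D = (\<Union>w1<M. \<Union>w2\<in>{..<M} - {w1}.
     (\<lambda>(v, u1, u2). (v, {u1, u2})) ` ((D w1 \<inter> D w2) \<times> D w1 \<times> D w2))"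

lemma finite_overlap_2paths: "(\<And>w. w < M \<Longrightarrow> finite (D w)) \<Longrightarrow> finite (overlap_2paths M D)"
  unfolding overlap_2paths_def by auto

lemma card_overlap_2paths_le:
  assumes fin: "\<And>w. w < M \<Longrightarrow> finite (D w)"
  shows "card (overlap_2paths M D) \<le> overlap_weight M D"
proof -
  let ?path = "\<lambda>(v, u1, u2). (v, {u1, u2})"
  have "card (overlap_2paths M D)
      \<le> (\<Sum>w1<M. card (\<Union>w2\<in>{..<M} - {w1}. ?path ` ((D w1 \<inter> D w2) \<times> D w1 \<times> D w2)))"
    unfolding overlap_2paths_def by (rule card_UN_le) simp
  also have "\<dots> \<le> (\<Sum>w1<M. \<Sum>w2\<in>{..<M} - {w1}. card (?path ` ((D w1 \<inter> D w2) \<times> D w1 \<times> D w2)))"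
    by (intro sum_mono card_UN_le) simp
  also have "\<dots> \<le> (\<Sum>w1<M. \<Sum>w2\<in>{..<M} - {w1}. card ((D w1 \<inter> D w2) \<times> D w1 \<times> D w2))"
    by (intro sum_mono card_image_le) (auto simp: fin)
  also have "\<dots> = overlap_weight M D"
    unfolding overlap_weight_def by (simp add: card_cartesian_product mult.assoc)
  finally show ?thesis .
qed

lemma rig_2paths_subset:
  "{(v, P). v < N \<and> P \<subseteq> {..<N} \<and> card P = 2 \<and> v \<notin> P \<and> (\<forall>u\<in>P. rig_adj M D v u)}
     \<subseteq> (\<Union>w<M. clique_2paths (D w)) \<union> overlap_2paths M D"
proof
  fix x assume "x \<in> {(v, P). v < N \<and> P \<subseteq> {..<N} \<and> card P = 2 \<and> v \<notin> P \<and> (\<forall>u\<in>P. rig_adj M D v u)}"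
  then obtain v P where P: "x = (v, P)" "card P = 2" "v \<notin> P" "\<forall>u\<in>P. rig_adj M D v u"
    by auto
  obtain u1 u2 where u: "P = {u1, u2}" "u1 \<noteq> u2" using P(2) by (auto simp: card_2_iff)
  obtain w1 where w1: "w1 < M" "v \<in> D w1" "u1 \<in> D w1"
    using P(4) u unfolding rig_adj_def by auto
  obtain w2 where w2: "w2 < M" "v \<in> D w2" "u2 \<in> D w2"
    using P(4) u unfolding rig_adj_def by auto
  show "x \<in> (\<Union>w<M. clique_2paths (D w)) \<union> overlap_2paths M D"
  proof (cases "w1 = w2")
    case True
    then have "x \<in> clique_2paths (D w1)" using P u w1 w2 unfolding clique_2paths_def by auto
    then show ?thesis using w1 by auto
  next
    case False
    then have "x \<in> (\<lambda>(v, u1, u2). (v, {u1, u2})) ` ((D w1 \<inter> D w2) \<times> D w1 \<times> D w2)"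
      using P u w1 w2 by (intro image_eqI[where x = "(v, u1, u2)"]) auto
    then show ?thesis using w1 w2 False unfolding overlap_2paths_def by blast
  qed
qed

lemma num_2paths_le:
  assumes "\<forall>w<M. D w \<subseteq> {..<N}"
  shows "num_2paths N (rig_adj M D) \<le> 3 * num_triangles N (rig_adj M D) + overlap_weight M D"
proof -
  have fin: "finite (D w)" if "w < M" for w
    using assms that finite_subset by blast
  have "num_2paths N (rig_adj M D) \<le> card ((\<Union>w<M. clique_2paths (D w)) \<union> overlap_2paths M D)"
    unfolding num_2paths_def using rig_2paths_subset
    by (rule card_mono[rotated]) (auto intro: finite_clique_2paths finite_overlap_2paths fin)
  also have "\<dots> \<le> card (\<Union>w<M. clique_2paths (D w)) + card (overlap_2paths M D)"
    by (rule card_Un_le)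
  finally show ?thesis
    using card_UN_clique_2paths_le[OF assms] card_overlap_2paths_le[of M D, OF fin] by linarith
qed

lemma global_clustering_close_to_one:
  assumes sub: "\<forall>w<M. D w \<subseteq> {..<N}" and \<epsilon>: "0 < \<epsilon>" "\<epsilon> \<le> 1" and x: "x > 0"
    and S: "real (clique_2path_total M D) > x"
    and R: "real (overlap_weight M D) < \<epsilon> / 2 * x"
  shows "\<bar>global_clustering N (rig_adj M D) - 1\<bar> < \<epsilon>"
proof -
  define t where "t = real (3 * num_triangles N (rig_adj M D))"
  define l where "l = real (num_2paths N (rig_adj M D))"
  define s where "s = real (clique_2path_total M D)"
  define r where "r = real (overlap_weight M D)"
  have "3 * num_triangles N (rig_adj M D) \<le> num_2paths N (rig_adj M D)"
    by (rule triple_num_triangles_le_num_2paths) (rule rig_adj_sym)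
  then have "t \<le> l" "s \<le> t + r" "l \<le> t + r"
    unfolding t_def l_def s_def r_def
    using clique_2path_total_le[OF sub] num_2paths_le[OF sub] by linarith+
  moreover have "r < \<epsilon> / 2 * s"
  proof -
    have "\<epsilon> / 2 * x \<le> \<epsilon> / 2 * s" using S \<epsilon> unfolding s_def by (intro mult_left_mono) auto
    then show ?thesis using R unfolding r_def by linarith
  qed
  moreover have "\<epsilon> / 2 * s \<le> s / 2" "s > 0"
    using \<epsilon> S x unfolding s_def by (auto simp: mult_right_mono)
  ultimately have "t \<le> l" "l > 0" "s \<le> 2 * l" "l - t < \<epsilon> / 2 * s"
    by linarith+
  moreover have "\<epsilon> / 2 * s \<le> \<epsilon> / 2 * (2 * l)"
    using \<open>s \<le> 2 * l\<close> \<epsilon> by (intro mult_left_mono) auto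
  ultimately have "l - t < \<epsilon> * l" "t \<le> l" "l > 0"
    by linarith+
  then have "\<bar>t / l - 1\<bar> < \<epsilon>"
    using \<epsilon> by (simp add: abs_if field_simps)
  moreover have "global_clustering N (rig_adj M D) = t / l"
    unfolding global_clustering_def t_def l_def by simp
  ultimately show ?thesis by simp
qed

section \<open>Sums over independent coordinates\<close>

lemma finite_set_Pi_pmf:
  assumes "finite I" "\<And>i. i \<in> I \<Longrightarrow> finite (set_pmf (p i))"
  shows "finite (set_pmf (Pi_pmf I dflt p))"
  using assms by (auto simp: set_Pi_pmf)

lemma expectation_Pi_pmf_component:
  fixes f :: "'b \<Rightarrow> real"
  assumes "finite I" "i \<in> I"
  shows "measure_pmf.expectation (Pi_pmf I dflt p) (\<lambda>D. f (D i)) = measure_pmf.expectation (p i) f"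
proof -
  have "measure_pmf.expectation (Pi_pmf I dflt p) (\<lambda>D. f (D i)) =
      measure_pmf.expectation (map_pmf (\<lambda>D. D i) (Pi_pmf I dflt p)) f"
    by (rule integral_map_pmf[symmetric])
  also have "map_pmf (\<lambda>D. D i) (Pi_pmf I dflt p) = p i"
    using assms by (simp add: Pi_pmf_component)
  finally show ?thesis .
qed

lemma expectation_Pi_pmf_two_components:
  fixes f g :: "'b \<Rightarrow> real"
  assumes I: "finite I" "i \<in> I" "j \<in> I" "i \<noteq> j"
    and int: "integrable (measure_pmf (p i)) f" "integrable (measure_pmf (p j)) g"
    and nonneg: "\<And>x. f x \<ge> 0" "\<And>x. g x \<ge> 0"
  shows "measure_pmf.expectation (Pi_pmf I dflt p) (\<lambda>D. f (D i) * g (D j)) =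
         measure_pmf.expectation (p i) f * measure_pmf.expectation (p j) g"
proof -
  define F where "F k = (if k = i then f else if k = j then g else (\<lambda>_. 1))" for k
  have prod_F: "(\<Prod>k\<in>I. h k) = h i * h j" if "\<And>k. k \<in> I - {i, j} \<Longrightarrow> h k = 1"
    for h :: "_ \<Rightarrow> real"
  proof -
    have "(\<Prod>k\<in>I. h k) = h i * (h j * (\<Prod>k\<in>I - {i} - {j}. h k))"
      using I by (simp add: prod.remove)
    also have "(\<Prod>k\<in>I - {i} - {j}. h k) = 1" using that by (intro prod.neutral) auto
    finally show ?thesis by simp
  qed
  have "measure_pmf.expectation (Pi_pmf I dflt p) (\<lambda>D. \<Prod>k\<in>I. F k (D k)) =
        (\<Prod>k\<in>I. measure_pmf.expectation (p k) (F k))"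
    by (rule expectation_prod_Pi_pmf) (use I int nonneg in \<open>auto simp: F_def\<close>)
  moreover have "(\<Prod>k\<in>I. F k (D k)) = f (D i) * g (D j)" for D
    by (subst prod_F) (use I in \<open>auto simp: F_def\<close>)
  moreover have "(\<Prod>k\<in>I. measure_pmf.expectation (p k) (F k)) =
      measure_pmf.expectation (p i) f * measure_pmf.expectation (p j) g"
    by (subst prod_F) (use I in \<open>auto simp: F_def\<close>)
  ultimately show ?thesis by simp
qed

lemma expectation_sum_Pi_pmf:
  fixes g :: "'b \<Rightarrow> real"
  assumes "finite I" "finite (set_pmf p)"
  shows "measure_pmf.expectation (Pi_pmf I dflt (\<lambda>_. p)) (\<lambda>D. \<Sum>w\<in>I. g (D w)) =
         real (card I) * measure_pmf.expectation p g"
  using assms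
  by (simp add: integrable_measure_pmf_finite finite_set_Pi_pmf expectation_Pi_pmf_component)

lemma expectation_square_sum_Pi_pmf_le:
  fixes g :: "'b \<Rightarrow> real"
  assumes I: "finite I" and p: "finite (set_pmf p)" and g: "\<And>x. 0 \<le> g x" "\<And>x. g x \<le> T"
  defines "a \<equiv> measure_pmf.expectation p g"
  shows "measure_pmf.expectation (Pi_pmf I dflt (\<lambda>_. p)) (\<lambda>D. (\<Sum>w\<in>I. g (D w))\<^sup>2)
    \<le> real (card I) * T\<^sup>2 + real (card I) * (real (card I) - 1) * a\<^sup>2"
proof -
  let ?\<Omega> = "Pi_pmf I dflt (\<lambda>_. p)"
  have int_p: "integrable (measure_pmf p) h" for h :: "'b \<Rightarrow> real"
    using p by (rule integrable_measure_pmf_finite)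
  have int: "integrable (measure_pmf ?\<Omega>) h" for h :: "_ \<Rightarrow> real"
    using finite_set_Pi_pmf[OF I p] by (rule integrable_measure_pmf_finite)
  have "measure_pmf.expectation p (\<lambda>x. g x * g x) \<le> T\<^sup>2"
    using g by (intro measure_pmf.integral_le_const int_p AE_pmfI)
      (metis mult_mono order.trans power2_eq_square)
  then have diag: "measure_pmf.expectation ?\<Omega> (\<lambda>D. g (D w) * g (D w)) \<le> T\<^sup>2" if "w \<in> I" for w
    using that I by (subst expectation_Pi_pmf_component) auto
  have off_diag: "measure_pmf.expectation ?\<Omega> (\<lambda>D. g (D w) * g (D w')) = a\<^sup>2"
    if "w \<in> I" "w' \<in> I - {w}" for w w'
    using that I g unfolding a_def power2_eq_square
    by (subst expectation_Pi_pmf_two_components) (auto intro: int_p)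
  have "(\<Sum>w\<in>I. g (D w))\<^sup>2 = (\<Sum>w\<in>I. g (D w) * g (D w) + (\<Sum>w'\<in>I - {w}. g (D w) * g (D w')))" for D
  proof -
    have "(\<Sum>w\<in>I. g (D w))\<^sup>2 = (\<Sum>w\<in>I. \<Sum>w'\<in>I. g (D w) * g (D w'))"
      by (simp add: power2_eq_square sum_product)
    also have "\<dots> = (\<Sum>w\<in>I. g (D w) * g (D w) + (\<Sum>w'\<in>I - {w}. g (D w) * g (D w')))"
      using I by (intro sum.cong refl) (simp add: sum.remove)
    finally show ?thesis .
  qed
  then have "measure_pmf.expectation ?\<Omega> (\<lambda>D. (\<Sum>w\<in>I. g (D w))\<^sup>2) =
      (\<Sum>w\<in>I. measure_pmf.expectation ?\<Omega> (\<lambda>D. g (D w) * g (D w))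
        + (\<Sum>w'\<in>I - {w}. measure_pmf.expectation ?\<Omega> (\<lambda>D. g (D w) * g (D w'))))"
    by (simp add: int)
  also have "\<dots> \<le> (\<Sum>w\<in>I. T\<^sup>2 + (\<Sum>w'\<in>I - {w}. a\<^sup>2))"
    by (intro sum_mono add_mono) (auto simp: diag off_diag)
  also have "\<dots> = real (card I) * T\<^sup>2 + real (card I) * (real (card I) - 1) * a\<^sup>2"
    using I by (cases "card I") (simp_all add: sum.distrib card_Diff_singleton_if algebra_simps)
  finally show ?thesis .
qed

lemma variance_sum_Pi_pmf_le:
  fixes g :: "'b \<Rightarrow> real"
  assumes I: "finite I" and p: "finite (set_pmf p)" and g: "\<And>x. 0 \<le> g x" "\<And>x. g x \<le> T"
  shows "measure_pmf.variance (Pi_pmf I dflt (\<lambda>_. p)) (\<lambda>D. \<Sum>w\<in>I. g (D w)) \<le> real (card I) * T\<^sup>2"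
proof -
  let ?\<Omega> = "Pi_pmf I dflt (\<lambda>_. p)" and ?Y = "\<lambda>D. \<Sum>w\<in>I. g (D w)"
  have "measure_pmf.variance ?\<Omega> ?Y = measure_pmf.expectation ?\<Omega> (\<lambda>D. (?Y D)\<^sup>2) - (measure_pmf.expectation ?\<Omega> ?Y)\<^sup>2"
    using finite_set_Pi_pmf[OF I p] by (intro measure_pmf.variance_eq integrable_measure_pmf_finite)
  also have "\<dots> \<le> real (card I) * T\<^sup>2 - real (card I) * (measure_pmf.expectation p g)\<^sup>2"
    using expectation_square_sum_Pi_pmf_le[OF I p g, of dflt] expectation_sum_Pi_pmf[OF I p, of dflt g]
    by (simp add: algebra_simps power2_eq_square)
  also have "\<dots> \<le> real (card I) * T\<^sup>2"
    by simp
  finally show ?thesis .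
qed

section \<open>The passive random intersection graph\<close>

definition subsets_of_card :: "nat \<Rightarrow> nat \<Rightarrow> nat set set" where
  "subsets_of_card N s = {A. A \<subseteq> {..<N} \<and> card A = s}"

lemma finite_subsets_of_card: "finite (subsets_of_card N s)"
  unfolding subsets_of_card_def by (rule finite_subset[of _ "Pow {..<N}"]) auto

lemma card_subsets_of_card: "card (subsets_of_card N s) = N choose s"
  unfolding subsets_of_card_def using n_subsets[of "{..<N}" s] by simp

lemma subsets_of_card_nonempty: "s \<le> N \<Longrightarrow> subsets_of_card N s \<noteq> {}"
  using card_subsets_of_card[of N s] by (metis card.empty zero_less_binomial_iff less_not_refl2)

lemma card_subsets_of_card_containing:
  assumes "v < N" "s \<ge> 1"
  shows "card {A \<in> subsets_of_card N s. v \<in> A} = (N - 1) choose (s - 1)"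
proof -
  have "bij_betw (insert v) {B. B \<subseteq> {..<N} - {v} \<and> card B = s - 1} {A \<in> subsets_of_card N s. v \<in> A}"
  proof (rule bij_betw_byWitness[where f' = "\<lambda>A. A - {v}"])
    have "card (insert v B) = s" if "B \<subseteq> {..<N} - {v}" "card B = s - 1" for B
      using that assms finite_subset[of B "{..<N}"] by (subst card_insert_disjoint) auto
    then show "insert v ` {B. B \<subseteq> {..<N} - {v} \<and> card B = s - 1} \<subseteq> {A \<in> subsets_of_card N s. v \<in> A}"
      using assms by (auto simp: subsets_of_card_def)
    show "(\<lambda>A. A - {v}) ` {A \<in> subsets_of_card N s. v \<in> A} \<subseteq> {B. B \<subseteq> {..<N} - {v} \<and> card B = s - 1}"
      by (auto simp: subsets_of_card_def finite_subset[of _ "{..<N}"])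
  qed auto
  then have "card {A \<in> subsets_of_card N s. v \<in> A} = card {B. B \<subseteq> {..<N} - {v} \<and> card B = s - 1}"
    by (simp add: bij_betw_same_card)
  also have "\<dots> = card ({..<N} - {v}) choose (s - 1)" by (rule n_subsets) simp
  finally show ?thesis using assms by simp
qed

lemma attr_set_pmf_altdef: "attr_set_pmf N P = bind_pmf P (\<lambda>s. pmf_of_set (subsets_of_card N s))"
  unfolding attr_set_pmf_def subsets_of_card_def ..

lemma set_attr_set_pmf:
  assumes "set_pmf P \<subseteq> {..N}" "A \<in> set_pmf (attr_set_pmf N P)"
  shows "A \<subseteq> {..<N}"
proof -
  from assms(2) obtain s where s: "s \<in> set_pmf P" "A \<in> set_pmf (pmf_of_set (subsets_of_card N s))"
    unfolding attr_set_pmf_altdef by auto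
  then have "A \<in> subsets_of_card N s"
    using assms(1) subsets_of_card_nonempty finite_subsets_of_card by auto
  then show ?thesis unfolding subsets_of_card_def by auto
qed

lemma finite_set_attr_set_pmf: "set_pmf P \<subseteq> {..N} \<Longrightarrow> finite (set_pmf (attr_set_pmf N P))"
  by (rule finite_subset[of _ "Pow {..<N}"]) (auto dest: set_attr_set_pmf)

lemma expectation_attr_set_pmf:
  fixes h :: "nat set \<Rightarrow> real"
  assumes "set_pmf P \<subseteq> {..N}"
  shows "measure_pmf.expectation (attr_set_pmf N P) h =
     (\<Sum>s\<le>N. pmf P s * measure_pmf.expectation (pmf_of_set (subsets_of_card N s)) h)"
  unfolding attr_set_pmf_altdef
  by (subst pmf_expectation_bind[of "{..N}"])
    (use assms subsets_of_card_nonempty finite_subsets_of_card in auto)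

lemma expectation_finite_pmf:
  fixes g :: "nat \<Rightarrow> real"
  assumes "set_pmf P \<subseteq> {..N}"
  shows "measure_pmf.expectation P g = (\<Sum>s\<le>N. pmf P s * g s)"
  by (subst integral_measure_pmf[of "{..N}"]) (use assms in auto)

lemma expectation_attr_set_pmf_card:
  fixes g :: "nat \<Rightarrow> real"
  assumes "set_pmf P \<subseteq> {..N}"
  shows "measure_pmf.expectation (attr_set_pmf N P) (\<lambda>A. g (card A)) = measure_pmf.expectation P g"
proof -
  have "measure_pmf.expectation (pmf_of_set (subsets_of_card N s)) (\<lambda>A. g (card A)) = g s"
    if "s \<le> N" for s
  proof -
    have "measure_pmf.expectation (pmf_of_set (subsets_of_card N s)) (\<lambda>A. g (card A)) =
        (\<Sum>A\<in>subsets_of_card N s. g s) / card (subsets_of_card N s)"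
      using subsets_of_card_nonempty[OF that] finite_subsets_of_card
      by (simp add: integral_pmf_of_set subsets_of_card_def)
    then show ?thesis
      using subsets_of_card_nonempty[OF that] finite_subsets_of_card by simp
  qed
  then show ?thesis using assms by (simp add: expectation_attr_set_pmf expectation_finite_pmf)
qed

definition card_if_mem :: "nat \<Rightarrow> nat set \<Rightarrow> real" where
  "card_if_mem v A = (if v \<in> A then real (card A) else 0)"

lemma expectation_card_if_mem_uniform:
  assumes "v < N" "s \<le> N"
  shows "measure_pmf.expectation (pmf_of_set (subsets_of_card N s)) (card_if_mem v) = real s ^ 2 / real N"
proof (cases "s = 0")
  case True
  then have "subsets_of_card N s = {{}}"
    by (auto simp: subsets_of_card_def finite_subset[of _ "{..<N}"])
  then show ?thesis using True by (simp add: card_if_mem_def pmf_of_set_singleton)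
next
  case False
  have "measure_pmf.expectation (pmf_of_set (subsets_of_card N s)) (card_if_mem v) =
      (\<Sum>A\<in>subsets_of_card N s. card_if_mem v A) / (N choose s)"
    using subsets_of_card_nonempty[OF assms(2)] finite_subsets_of_card
    by (simp add: integral_pmf_of_set card_subsets_of_card)
  also have "(\<Sum>A\<in>subsets_of_card N s. card_if_mem v A) =
      (\<Sum>A\<in>subsets_of_card N s. if v \<in> A then real s else 0)"
    by (rule sum.cong) (auto simp: card_if_mem_def subsets_of_card_def)
  also have "(\<Sum>A\<in>subsets_of_card N s. if v \<in> A then real s else 0) = real s * ((N - 1) choose (s - 1))"
    using card_subsets_of_card_containing[OF assms(1)] False
    by (simp add: sum.If_cases finite_subsets_of_card Int_def)
  also have "real N * ((N - 1) choose (s - 1)) = real s * (N choose s)"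
    using times_binomial_minus1_eq[of s N] False by (metis of_nat_mult gr0I)
  then have "real s * ((N - 1) choose (s - 1)) / (N choose s) = real s ^ 2 / real N"
    using assms by (simp add: field_simps power2_eq_square)
  finally show ?thesis .
qed

lemma expectation_card_if_mem:
  assumes "set_pmf P \<subseteq> {..N}" "v < N"
  shows "measure_pmf.expectation (attr_set_pmf N P) (card_if_mem v) =
     measure_pmf.expectation P (\<lambda>j. real j ^ 2) / real N"
  using assms
  by (simp add: expectation_attr_set_pmf expectation_finite_pmf expectation_card_if_mem_uniform
      sum_divide_distrib)

lemma set_passive_rig:
  assumes "set_pmf P \<subseteq> {..N}" "D \<in> set_pmf (passive_rig N M P)" "w < M"
  shows "D w \<subseteq> {..<N}"
proof -
  have "D w \<in> set_pmf (attr_set_pmf N P)"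
    using assms(2,3) by (auto simp: passive_rig_def set_Pi_pmf PiE_dflt_def)
  then show ?thesis using set_attr_set_pmf[OF assms(1)] by blast
qed

lemma finite_set_passive_rig: "set_pmf P \<subseteq> {..N} \<Longrightarrow> finite (set_pmf (passive_rig N M P))"
  unfolding passive_rig_def by (intro finite_set_Pi_pmf finite_set_attr_set_pmf) auto

lemma overlap_weight_eq_sum_card_if_mem:
  assumes "\<forall>w<M. D w \<subseteq> {..<N}"
  shows "real (overlap_weight M D) =
    (\<Sum>w<M. \<Sum>w'\<in>{..<M} - {w}. \<Sum>v<N. card_if_mem v (D w) * card_if_mem v (D w'))"
proof -
  have "(\<Sum>v<N. card_if_mem v (D w) * card_if_mem v (D w')) = card (D w \<inter> D w') * card (D w) * card (D w')"
    if "w < M" "w' < M" for w w'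
  proof -
    have "(\<Sum>v<N. card_if_mem v (D w) * card_if_mem v (D w')) =
        (\<Sum>v<N. if v \<in> D w \<inter> D w' then real (card (D w)) * real (card (D w')) else 0)"
      by (rule sum.cong) (auto simp: card_if_mem_def)
    also have "\<dots> = (\<Sum>v\<in>{v\<in>{..<N}. v \<in> D w \<inter> D w'}. real (card (D w)) * real (card (D w')))"
      by (rule sum.inter_filter[symmetric]) simp
    also have "{v\<in>{..<N}. v \<in> D w \<inter> D w'} = D w \<inter> D w'" using assms that by auto
    finally show ?thesis by simp
  qed
  then show ?thesis unfolding overlap_weight_def of_nat_sum by (intro sum.cong refl) auto
qed

lemma expectation_overlap_weight:
  assumes supp: "set_pmf P \<subseteq> {..N}"
  shows "measure_pmf.expectation (passive_rig N M P) (\<lambda>D. real (overlap_weight M D)) =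
    real M * (real M - 1) * (measure_pmf.expectation P (\<lambda>j. real j ^ 2))\<^sup>2 / real N"
proof -
  let ?\<Omega> = "passive_rig N M P" and ?B = "measure_pmf.expectation P (\<lambda>j. real j ^ 2)"
  have int: "integrable (measure_pmf ?\<Omega>) h" for h :: "_ \<Rightarrow> real"
    using finite_set_passive_rig[OF supp] by (rule integrable_measure_pmf_finite)
  have pair: "measure_pmf.expectation ?\<Omega> (\<lambda>D. card_if_mem v (D w) * card_if_mem v (D w'))
      = ?B / real N * (?B / real N)"
    if "w < M" "w' < M" "w \<noteq> w'" "v < N" for v w w'
    using that unfolding passive_rig_def
    by (subst expectation_Pi_pmf_two_components)
      (auto simp: card_if_mem_def expectation_card_if_mem[OF supp]
        intro: integrable_measure_pmf_finite finite_set_attr_set_pmf[OF supp])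
  have "measure_pmf.expectation ?\<Omega> (\<lambda>D. real (overlap_weight M D)) = measure_pmf.expectation ?\<Omega>
      (\<lambda>D. \<Sum>w<M. \<Sum>w'\<in>{..<M} - {w}. \<Sum>v<N. card_if_mem v (D w) * card_if_mem v (D w'))"
    using set_passive_rig[OF supp]
    by (intro integral_cong_AE AE_pmfI overlap_weight_eq_sum_card_if_mem) auto
  also have "\<dots> = (\<Sum>w<M. \<Sum>w'\<in>{..<M} - {w}. \<Sum>v<N. ?B / real N * (?B / real N))"
    by (simp add: int pair)
  also have "\<dots> = real M * (real M - 1) * ?B\<^sup>2 / real N"
    by (cases M) (simp_all add: power2_eq_square algebra_simps add_divide_distrib)
  finally show ?thesis .
qed

section \<open>Truncated clique 2-path counts\<close>

definition clique_2path_poly :: "real \<Rightarrow> real" where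
  "clique_2path_poly x = x * (x - 1) * (x - 2) / 2"

definition truncated_2path_poly :: "real \<Rightarrow> real \<Rightarrow> real" where
  "truncated_2path_poly T x = min (max (clique_2path_poly x) 0) T"

lemma real_choose_two: "real (n choose 2) = real n * (real n - 1) / 2"
proof (induction n)
  case (Suc n)
  have "Suc n choose 2 = n + (n choose 2)"
    using binomial_Suc_Suc[of n 1] by (simp add: numeral_2_eq_2)
  then show ?case using Suc by (simp add: field_simps)
qed simp

lemma clique_2path_count_eq_poly: "real (clique_2path_count k) = clique_2path_poly (real k)"
  by (cases k) (simp_all add: clique_2path_count_def clique_2path_poly_def real_choose_two field_simps)

lemma truncated_2path_poly_le_count: "truncated_2path_poly T (real k) \<le> real (clique_2path_count k)"
  unfolding truncated_2path_poly_def clique_2path_count_eq_poly[symmetric] by simp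

lemma truncated_2path_poly_bounds: "0 \<le> T \<Longrightarrow> 0 \<le> truncated_2path_poly T x \<and> truncated_2path_poly T x \<le> T"
  unfolding truncated_2path_poly_def by simp

definition truncated_2path_total :: "real \<Rightarrow> nat \<Rightarrow> (nat \<Rightarrow> nat set) \<Rightarrow> real" where
  "truncated_2path_total T M D = (\<Sum>w<M. truncated_2path_poly T (real (card (D w))))"

lemma truncated_2path_total_le: "truncated_2path_total T M D \<le> real (clique_2path_total M D)"
  unfolding truncated_2path_total_def clique_2path_total_def of_nat_sum
  by (intro sum_mono truncated_2path_poly_le_count)

lemma prob_overlap_weight_ge_le:
  assumes supp: "set_pmf P \<subseteq> {..N}" and c: "c > 0"
  shows "measure_pmf.prob (passive_rig N M P) {D. c \<le> real (overlap_weight M D)}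
    \<le> real M * (real M - 1) * (measure_pmf.expectation P (\<lambda>j. real j ^ 2))\<^sup>2 / real N / c"
  using c integral_Markov_inequality_measure[of "measure_pmf (passive_rig N M P)"
      "\<lambda>D. real (overlap_weight M D)" UNIV c]
  by (simp add: integrable_measure_pmf_finite finite_set_passive_rig[OF supp]
      expectation_overlap_weight[OF supp])

lemma prob_truncated_2path_total_deviation_le:
  fixes T :: real
  assumes supp: "set_pmf P \<subseteq> {..N}" and T: "T \<ge> 0" and c: "c > 0"
  defines "a \<equiv> measure_pmf.expectation P (\<lambda>j. truncated_2path_poly T (real j))"
  shows "measure_pmf.prob (passive_rig N M P) {D. c \<le> \<bar>truncated_2path_total T M D - real M * a\<bar>}
    \<le> real M * T\<^sup>2 / c\<^sup>2"
proof -
  let ?\<Omega> = "passive_rig N M P" and ?Y = "truncated_2path_total T M"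
  have fin: "finite (set_pmf (attr_set_pmf N P))" by (rule finite_set_attr_set_pmf[OF supp])
  have mean: "measure_pmf.expectation ?\<Omega> ?Y = real M * a"
    unfolding passive_rig_def a_def truncated_2path_total_def
    using expectation_attr_set_pmf_card[OF supp, of "\<lambda>j. truncated_2path_poly T (real j)"]
    by (subst expectation_sum_Pi_pmf) (auto simp: fin)
  have "measure_pmf.prob ?\<Omega> {D. c \<le> \<bar>?Y D - real M * a\<bar>} \<le> measure_pmf.variance ?\<Omega> ?Y / c\<^sup>2"
    unfolding mean[symmetric] using c
    by (intro measure_pmf.Chebyshev_inequality[simplified])
      (auto intro: integrable_measure_pmf_finite finite_set_passive_rig[OF supp])
  also have "measure_pmf.variance ?\<Omega> ?Y \<le> real M * T\<^sup>2"
    unfolding passive_rig_def truncated_2path_total_def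
    using variance_sum_Pi_pmf_le[of "{..<M}" "attr_set_pmf N P" "\<lambda>A. truncated_2path_poly T (real (card A))" T]
    by (simp add: fin truncated_2path_poly_bounds[OF T])
  then have "measure_pmf.variance ?\<Omega> ?Y / c\<^sup>2 \<le> real M * T\<^sup>2 / c\<^sup>2"
    by (simp add: divide_right_mono)
  finally show ?thesis .
qed

lemma prob_global_clustering_far_le:
  fixes P :: "nat pmf" and T :: real
  defines "B \<equiv> measure_pmf.expectation P (\<lambda>j. real j ^ 2)"
    and "a \<equiv> measure_pmf.expectation P (\<lambda>j. truncated_2path_poly T (real j))"
  assumes supp: "set_pmf P \<subseteq> {..N}" and N: "N > 0" and \<epsilon>: "0 < \<epsilon>" "\<epsilon> \<le> 1"
    and L: "L > 0" and T: "T \<ge> 0" and big: "2 * L * real N \<le> real M * a"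
  shows "measure_pmf.prob (passive_rig N M P) {D. \<bar>global_clustering N (rig_adj M D) - 1\<bar> > \<epsilon>}
    \<le> 2 * (real M / real N)\<^sup>2 * B\<^sup>2 / (\<epsilon> * L) + real M / real N * T\<^sup>2 / (L\<^sup>2 * real N)"
proof -
  let ?\<Omega> = "passive_rig N M P" and ?far = "{D. \<bar>global_clustering N (rig_adj M D) - 1\<bar> > \<epsilon>}"
  have LN: "L * real N > 0" using L N by simp
  define E1 where "E1 = {D. \<epsilon> / 2 * (L * real N) \<le> real (overlap_weight M D)}"
  define E2 where "E2 = {D. L * real N \<le> \<bar>truncated_2path_total T M D - real M * a\<bar>}"
  have "?far \<inter> set_pmf ?\<Omega> \<subseteq> E1 \<union> E2"
  proof (rule subsetI, rule ccontr)
    fix D assume D: "D \<in> ?far \<inter> set_pmf ?\<Omega>" and "D \<notin> E1 \<union> E2"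
    then have R: "real (overlap_weight M D) < \<epsilon> / 2 * (L * real N)"
      and S: "L * real N < real (clique_2path_total M D)"
      using big truncated_2path_total_le[of T M D] unfolding E1_def E2_def by auto
    have "\<forall>w<M. D w \<subseteq> {..<N}" using D set_passive_rig[OF supp] by blast
    from global_clustering_close_to_one[OF this \<epsilon> LN S R] show False using D by simp
  qed
  then have "measure_pmf.prob ?\<Omega> ?far \<le> measure_pmf.prob ?\<Omega> (E1 \<union> E2)"
    by (subst measure_Int_set_pmf[symmetric]) (rule measure_pmf.finite_measure_mono, simp_all)
  also have "\<dots> \<le> measure_pmf.prob ?\<Omega> E1 + measure_pmf.prob ?\<Omega> E2"
    by (rule measure_Un_le) simp_all
  also have "measure_pmf.prob ?\<Omega> E1 \<le> 2 * (real M / real N)\<^sup>2 * B\<^sup>2 / (\<epsilon> * L)"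
  proof -
    have "real M * (real M - 1) * B\<^sup>2 \<le> real M * real M * B\<^sup>2"
      by (intro mult_right_mono mult_left_mono) auto
    then have "real M * (real M - 1) * B\<^sup>2 / real N / (\<epsilon> / 2 * (L * real N))
        \<le> real M * real M * B\<^sup>2 / real N / (\<epsilon> / 2 * (L * real N))"
      using \<epsilon> LN by (intro divide_right_mono) auto
    also have "\<dots> = 2 * (real M / real N)\<^sup>2 * B\<^sup>2 / (\<epsilon> * L)"
      using \<epsilon> L N by (simp add: field_simps power2_eq_square)
    finally show ?thesis
      using prob_overlap_weight_ge_le[OF supp, of "\<epsilon> / 2 * (L * real N)" M] \<epsilon> LN
      unfolding E1_def B_def by simp
  qed
  also have "measure_pmf.prob ?\<Omega> E2 \<le> real M / real N * T\<^sup>2 / (L\<^sup>2 * real N)"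
    unfolding E2_def a_def using prob_truncated_2path_total_deviation_le[OF supp T LN, of M]
    by (simp add: power2_eq_square ac_simps)
  finally show ?thesis by simp
qed

lemma prob_global_clustering_far_le_uniform:
  fixes P :: "nat pmf" and T :: real
  assumes supp: "set_pmf P \<subseteq> {..N}" and N: "N > 0" and \<epsilon>: "0 < \<epsilon>" "\<epsilon> \<le> 1"
    and L: "L > 0" and T: "T \<ge> 0" and \<beta>: "\<beta> > 0"
    and ratio: "\<beta> / 2 < real M / real N" "real M / real N < \<beta> + 1"
    and B: "\<bar>measure_pmf.expectation P (\<lambda>j. real j ^ 2)\<bar> \<le> Bm"
    and mean: "4 * L / \<beta> < measure_pmf.expectation P (\<lambda>j. truncated_2path_poly T (real j))"
  shows "measure_pmf.prob (passive_rig N M P) {D. \<bar>global_clustering N (rig_adj M D) - 1\<bar> > \<epsilon>}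
    \<le> 2 * (\<beta> + 1)\<^sup>2 * Bm\<^sup>2 / (\<epsilon> * L) + real M / real N * T\<^sup>2 / (L\<^sup>2 * real N)"
proof -
  let ?a = "measure_pmf.expectation P (\<lambda>j. truncated_2path_poly T (real j))"
  have "\<beta> / 2 * (4 * L / \<beta>) < real M / real N * ?a"
    using ratio mean \<beta> L by (intro mult_strict_mono) (auto intro: less_trans[OF half_gt_zero])
  then have "2 * L * real N \<le> real M * ?a"
    using \<beta> N by (simp add: field_simps)
  then have "measure_pmf.prob (passive_rig N M P) {D. \<bar>global_clustering N (rig_adj M D) - 1\<bar> > \<epsilon>}
    \<le> 2 * (real M / real N)\<^sup>2 * (measure_pmf.expectation P (\<lambda>j. real j ^ 2))\<^sup>2 / (\<epsilon> * L)
      + real M / real N * T\<^sup>2 / (L\<^sup>2 * real N)"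
    by (rule prob_global_clustering_far_le[OF supp N \<epsilon> L T])
  moreover have "2 * (real M / real N)\<^sup>2 * (measure_pmf.expectation P (\<lambda>j. real j ^ 2))\<^sup>2 / (\<epsilon> * L)
      \<le> 2 * (\<beta> + 1)\<^sup>2 * Bm\<^sup>2 / (\<epsilon> * L)"
    using ratio \<epsilon> L B by (intro divide_right_mono mult_mono power_mono) (auto simp: abs_le_square_iff)
  ultimately show ?thesis by linarith
qed

lemma cube_le_2path_poly: "x ^ 3 \<le> 2 * max (clique_2path_poly x) 0 + 3 * x\<^sup>2"
proof (cases "x \<ge> 0")
  case True
  have "x ^ 3 = 2 * clique_2path_poly x + 3 * x\<^sup>2 - 2 * x"
    unfolding clique_2path_poly_def by (simp add: field_simps power3_eq_cube power2_eq_square)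
  then show ?thesis using True by simp
next
  case False
  then have "x ^ 3 < 0" by (simp add: power_less_zero_eq)
  then show ?thesis by (smt (verit) zero_le_power2)
qed

lemma nn_integral_2path_poly_infinite:
  assumes "real_distribution Z" and Z_sq: "integrable Z (\<lambda>x. x\<^sup>2)"
    and Z_cube: "(\<integral>\<^sup>+ x. ennreal (x ^ 3) \<partial>Z) = \<infinity>"
  shows "(\<integral>\<^sup>+ x. ennreal (max (clique_2path_poly x) 0) \<partial>Z) = \<infinity>"
proof -
  interpret Z: real_distribution Z by fact
  have [measurable]: "clique_2path_poly \<in> borel_measurable Z"
    unfolding clique_2path_poly_def by (simp add: measurable_cong_sets[OF Z.events_eq_borel refl])
  have sq: "(\<lambda>x. x\<^sup>2) \<in> borel_measurable Z"
    by (simp add: measurable_cong_sets[OF Z.events_eq_borel refl])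
  have "\<infinity> \<le> (\<integral>\<^sup>+ x. ennreal (2 * max (clique_2path_poly x) 0 + 3 * x\<^sup>2) \<partial>Z)"
    unfolding Z_cube[symmetric] by (intro nn_integral_mono ennreal_leI cube_le_2path_poly)
  also have "\<dots> = 2 * (\<integral>\<^sup>+ x. ennreal (max (clique_2path_poly x) 0) \<partial>Z) + 3 * (\<integral>\<^sup>+ x. ennreal (x\<^sup>2) \<partial>Z)"
    using sq by (simp add: ennreal_plus ennreal_mult nn_integral_add nn_integral_cmult)
  finally have "2 * (\<integral>\<^sup>+ x. ennreal (max (clique_2path_poly x) 0) \<partial>Z) + 3 * (\<integral>\<^sup>+ x. ennreal (x\<^sup>2) \<partial>Z) = \<infinity>"
    by (simp add: top_unique)
  moreover have "(\<integral>\<^sup>+ x. ennreal (x\<^sup>2) \<partial>Z) < \<infinity>"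
    using nn_integral_eq_integral[OF Z_sq] by simp
  ultimately show ?thesis by (auto simp: ennreal_mult_eq_top_iff ennreal_add_eq_top top.not_eq_extremum)
qed

lemma integral_truncated_2path_poly_unbounded:
  assumes Z: "real_distribution Z" and "integrable Z (\<lambda>x. x\<^sup>2)"
    and "(\<integral>\<^sup>+ x. ennreal (x ^ 3) \<partial>Z) = \<infinity>"
  shows "\<exists>T::nat. K < (\<integral>x. truncated_2path_poly (real T) x \<partial>Z)"
proof -
  interpret Z: real_distribution Z by fact
  have [measurable]: "truncated_2path_poly t \<in> borel_measurable Z" for t
    unfolding truncated_2path_poly_def clique_2path_poly_def
    by (simp add: measurable_cong_sets[OF Z.events_eq_borel refl])
  have "(SUP T. ennreal (truncated_2path_poly (real T) x)) = ennreal (max (clique_2path_poly x) 0)" for x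
  proof (rule antisym)
    show "(SUP T. ennreal (truncated_2path_poly (real T) x)) \<le> ennreal (max (clique_2path_poly x) 0)"
      by (intro SUP_least ennreal_leI) (simp add: truncated_2path_poly_def)
    have "ennreal (max (clique_2path_poly x) 0) =
        ennreal (truncated_2path_poly (real (nat \<lceil>max (clique_2path_poly x) 0\<rceil>)) x)"
      unfolding truncated_2path_poly_def by (simp add: min_def)
    also have "\<dots> \<le> (SUP T. ennreal (truncated_2path_poly (real T) x))" by (rule SUP_upper) simp
    finally show "ennreal (max (clique_2path_poly x) 0) \<le> (SUP T. ennreal (truncated_2path_poly (real T) x))" .
  qed
  moreover have "(SUP T. (\<integral>\<^sup>+ x. ennreal (truncated_2path_poly (real T) x) \<partial>Z))
      = (\<integral>\<^sup>+ x. (SUP T. ennreal (truncated_2path_poly (real T) x)) \<partial>Z)"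
  proof (rule nn_integral_monotone_convergence_SUP[symmetric])
    show "incseq (\<lambda>T x. ennreal (truncated_2path_poly (real T) x))"
      by (intro monoI le_funI ennreal_leI) (auto simp: truncated_2path_poly_def)
  qed simp
  ultimately have SUP_inf: "(SUP T. (\<integral>\<^sup>+ x. ennreal (truncated_2path_poly (real T) x) \<partial>Z)) = \<infinity>"
    using nn_integral_2path_poly_infinite[OF assms] by simp
  have "ennreal (max K 0) < (SUP T. (\<integral>\<^sup>+ x. ennreal (truncated_2path_poly (real T) x) \<partial>Z))"
    unfolding SUP_inf by simp
  then obtain T :: nat where T: "ennreal (max K 0) < (\<integral>\<^sup>+ x. ennreal (truncated_2path_poly (real T) x) \<partial>Z)"
    by (auto simp: less_SUP_iff)
  moreover have "(\<integral>\<^sup>+ x. ennreal (truncated_2path_poly (real T) x) \<partial>Z) = ennreal (\<integral>x. truncated_2path_poly (real T) x \<partial>Z)"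
    using truncated_2path_poly_bounds[of "real T"]
    by (intro nn_integral_eq_integral Z.integrable_const_bound[where B = "real T"]) auto
  ultimately have "max K 0 < (\<integral>x. truncated_2path_poly (real T) x \<partial>Z)"
    by (metis ennreal_less_iff max.cobounded2)
  then show ?thesis by auto
qed

lemma weak_conv_pmf_expectation_tendsto:
  fixes P :: "nat \<Rightarrow> nat pmf" and f :: "real \<Rightarrow> real"
  assumes Z: "real_distribution Z"
    and conv: "weak_conv_m (\<lambda>k. distr (measure_pmf (P k)) borel real) Z"
    and cont: "\<And>x. isCont f x" and bdd: "\<And>x. \<bar>f x\<bar> \<le> B"
  shows "(\<lambda>k. measure_pmf.expectation (P k) (\<lambda>j. f (real j))) \<longlonglongrightarrow> (\<integral>x. f x \<partial>Z)"
proof -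
  have "real_distribution (distr (measure_pmf (P k)) borel real)" for k
    by (simp add: real_distribution_def real_distribution_axioms_def measure_pmf.prob_space_distr)
  then have "(\<lambda>k. \<integral>x. f x \<partial>distr (measure_pmf (P k)) borel real) \<longlonglongrightarrow> (\<integral>x. f x \<partial>Z)"
    using Z conv cont bdd by (intro weak_conv_imp_integral_bdd_continuous_conv) auto
  moreover have "f \<in> borel_measurable borel"
    using cont by (intro borel_measurable_continuous_onI continuous_at_imp_continuous_on) auto
  ultimately show ?thesis by (simp add: integral_distr)
qed

lemma truncated_2path_means_unbounded:
  fixes Pstar :: "nat \<Rightarrow> nat pmf"
  assumes "real_distribution Z"
    and "weak_conv_m (\<lambda>k. distr (measure_pmf (Pstar k)) borel real) Z"
    and "integrable Z (\<lambda>x. x\<^sup>2)" and "(\<integral>\<^sup>+ x. ennreal (x ^ 3) \<partial>Z) = \<infinity>"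
  shows "\<exists>T\<ge>0. eventually (\<lambda>k. K < measure_pmf.expectation (Pstar k)
      (\<lambda>j. truncated_2path_poly T (real j))) sequentially"
proof -
  obtain T :: nat where K: "K < (\<integral>x. truncated_2path_poly (real T) x \<partial>Z)"
    using integral_truncated_2path_poly_unbounded[OF assms(1,3,4)] by blast
  have "isCont (truncated_2path_poly (real T)) x" for x
    unfolding truncated_2path_poly_def clique_2path_poly_def by (intro continuous_intros) auto
  then have "(\<lambda>k. measure_pmf.expectation (Pstar k) (\<lambda>j. truncated_2path_poly (real T) (real j)))
      \<longlonglongrightarrow> (\<integral>x. truncated_2path_poly (real T) x \<partial>Z)"
    using truncated_2path_poly_bounds[of "real T"]
    by (intro weak_conv_pmf_expectation_tendsto[OF assms(1,2), where B = "real T"]) auto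
  from order_tendstoD(1)[OF this K] show ?thesis by (intro exI[of _ "real T"]) simp
qed

lemma ratio_times_const_div_tendsto_0:
  assumes "filterlim n at_top sequentially" "(\<lambda>k. real (m k) / real (n k)) \<longlonglongrightarrow> \<beta>"
  shows "(\<lambda>k. real (m k) / real (n k) * c / real (n k)) \<longlonglongrightarrow> 0"
  using filterlim_compose[OF filterlim_real_sequentially assms(1)]
  by (intro tendsto_divide_0[OF tendsto_mult[OF assms(2) tendsto_const]] filterlim_at_top_imp_at_infinity)

lemma prob_global_clustering_far_tendsto_0:
  fixes n m :: "nat \<Rightarrow> nat" and Pstar :: "nat \<Rightarrow> nat pmf"
  assumes \<beta>: "\<beta> > 0" and n_lim: "filterlim n at_top sequentially"
    and ratio: "(\<lambda>k. real (m k) / real (n k)) \<longlonglongrightarrow> \<beta>"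
    and supp: "\<And>k. set_pmf (Pstar k) \<subseteq> {..n k}"
    and B: "\<And>k. \<bar>measure_pmf.expectation (Pstar k) (\<lambda>j. real j ^ 2)\<bar> \<le> Bm"
    and means: "\<And>K. \<exists>T\<ge>0. eventually (\<lambda>k. K < measure_pmf.expectation (Pstar k)
      (\<lambda>j. truncated_2path_poly T (real j))) sequentially"
    and \<epsilon>: "0 < \<epsilon>" "\<epsilon> \<le> 1"
  shows "(\<lambda>k. measure_pmf.prob (passive_rig (n k) (m k) (Pstar k))
           {D. \<bar>global_clustering (n k) (rig_adj (m k) D) - 1\<bar> > \<epsilon>}) \<longlonglongrightarrow> 0"
proof (rule order_tendstoI)
  fix \<eta> :: real assume \<eta>: "\<eta> > 0"
  define L where "L = 4 * (\<beta> + 1)\<^sup>2 * Bm\<^sup>2 / (\<epsilon> * \<eta>) + 1"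
  have "0 \<le> 4 * (\<beta> + 1)\<^sup>2 * Bm\<^sup>2 / (\<epsilon> * \<eta>)"
    using \<epsilon> \<eta> by simp
  then have L: "L > 0" unfolding L_def by linarith
  have "\<epsilon> * \<eta> * L = 4 * (\<beta> + 1)\<^sup>2 * Bm\<^sup>2 + \<epsilon> * \<eta>"
    unfolding L_def using \<epsilon> \<eta> by (simp add: field_simps)
  then have first_small: "2 * (\<beta> + 1)\<^sup>2 * Bm\<^sup>2 / (\<epsilon> * L) < \<eta> / 2"
    using \<epsilon> \<eta> L by (simp add: pos_divide_less_eq mult_pos_pos) (simp add: algebra_simps)
  obtain T where T: "T \<ge> 0"
    and ev_means: "eventually (\<lambda>k. 4 * L / \<beta> < measure_pmf.expectation (Pstar k)
      (\<lambda>j. truncated_2path_poly T (real j))) sequentially"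
    using means by blast
  let ?q = "\<lambda>k. real (m k) / real (n k)"
  have "eventually (\<lambda>k. n k \<ge> 1) sequentially"
    using n_lim by (simp add: filterlim_at_top)
  then have "eventually (\<lambda>k. n k > 0) sequentially"
    by (rule eventually_mono) simp
  moreover have "eventually (\<lambda>k. \<beta> / 2 < ?q k \<and> ?q k < \<beta> + 1) sequentially"
    using ratio \<beta> by (intro eventually_conj order_tendstoD) auto
  moreover have "(\<lambda>k. ?q k * T\<^sup>2 / (L\<^sup>2 * real (n k))) \<longlonglongrightarrow> 0"
    using ratio_times_const_div_tendsto_0[OF n_lim ratio, of "T\<^sup>2 / L\<^sup>2"]
    by (simp add: divide_divide_eq_left mult.assoc)
  then have "eventually (\<lambda>k. ?q k * T\<^sup>2 / (L\<^sup>2 * real (n k)) < \<eta> / 2) sequentially"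
    using \<eta> by (intro order_tendstoD) auto
  ultimately show "eventually (\<lambda>k. measure_pmf.prob (passive_rig (n k) (m k) (Pstar k))
      {D. \<bar>global_clustering (n k) (rig_adj (m k) D) - 1\<bar> > \<epsilon>} < \<eta>) sequentially"
    using ev_means
  proof eventually_elim
    case (elim k)
    then have "measure_pmf.prob (passive_rig (n k) (m k) (Pstar k))
        {D. \<bar>global_clustering (n k) (rig_adj (m k) D) - 1\<bar> > \<epsilon>}
      \<le> 2 * (\<beta> + 1)\<^sup>2 * Bm\<^sup>2 / (\<epsilon> * L) + ?q k * T\<^sup>2 / (L\<^sup>2 * real (n k))"
      by (intro prob_global_clustering_far_le_uniform supp \<epsilon> L T \<beta> B) auto
    then show ?case using elim first_small by linarith
  qed
qed (auto intro!: always_eventually less_le_trans[OF _ measure_nonneg])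

theorem theorem2:
  fixes \<beta> :: real
    and n m :: "nat \<Rightarrow> nat"
    and Pstar :: "nat \<Rightarrow> nat pmf"
    and Z :: "real measure"
  assumes beta_pos: "\<beta> > 0"
    and n_lim: "filterlim n at_top sequentially"
    and m_lim: "filterlim m at_top sequentially"
    and ratio: "(\<lambda>k. real (m k) / real (n k)) \<longlonglongrightarrow> \<beta>"
    and support: "\<And>k. set_pmf (Pstar k) \<subseteq> {..n k}"
    and Z_distr: "real_distribution Z"
    and conv_distr: "weak_conv_m (\<lambda>k. distr (measure_pmf (Pstar k)) borel real) Z"
    and Z_sq: "integrable Z (\<lambda>x. x ^ 2)"
    and second_moment:
      "(\<lambda>k. measure_pmf.expectation (Pstar k) (\<lambda>j. real j ^ 2))
         \<longlonglongrightarrow> (\<integral>x. x ^ 2 \<partial>Z)"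
    and Z_cube: "(\<integral>\<^sup>+ x. ennreal (x ^ 3) \<partial>Z) = \<infinity>"
  shows "\<forall>\<epsilon>>0. (\<lambda>k. measure_pmf.prob (passive_rig (n k) (m k) (Pstar k))
            {D. \<bar>global_clustering (n k) (rig_adj (m k) D) - 1\<bar> > \<epsilon>}) \<longlonglongrightarrow> 0"
proof (intro allI impI)
  fix \<epsilon> :: real assume "\<epsilon> > 0"
  obtain Bm where Bm: "\<And>k. \<bar>measure_pmf.expectation (Pstar k) (\<lambda>j. real j ^ 2)\<bar> \<le> Bm"
    using convergent_imp_Bseq[OF convergentI[OF second_moment]] by (auto simp: Bseq_def)
  let ?prob = "\<lambda>\<epsilon> k. measure_pmf.prob (passive_rig (n k) (m k) (Pstar k))
      {D. \<bar>global_clustering (n k) (rig_adj (m k) D) - 1\<bar> > \<epsilon>}"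
  have lim: "?prob (min \<epsilon> 1) \<longlonglongrightarrow> 0"
    by (rule prob_global_clustering_far_tendsto_0[OF beta_pos n_lim ratio support Bm
        truncated_2path_means_unbounded[OF Z_distr conv_distr Z_sq Z_cube]])
      (use \<open>\<epsilon> > 0\<close> in auto)
  have "?prob \<epsilon> k \<le> ?prob (min \<epsilon> 1) k" for k
    by (rule measure_pmf.finite_measure_mono) auto
  then have "eventually (\<lambda>k. ?prob \<epsilon> k \<le> ?prob (min \<epsilon> 1) k) sequentially"
    by simp
  from tendsto_sandwich[OF _ this tendsto_const lim] show "?prob \<epsilon> \<longlonglongrightarrow> 0"
    by simp
qed

end
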